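(* For $n \ge 3$, $\dim_{1,f}(C_n)=\frac{n}{2}$ if $n \in \{3,4\}$, and $\dim_{1,f}(C_n)=\frac{n}{4}$ if $n \ge 5$.
   Context: $C_n$ is the cycle on $n$ vertices. $d(x,y)$ is the distance in $G$. $d_1(x,y)=\min\{d(x,y),2\}$ and $R_1\{x,y\}=\{z\in V(G): d_1(x,z)\neq d_1(y,z)\}$. For a function $g$ on $V(G)$ and $U\subseteq V(G)$, $g(U)=\sum_{s\in U}g(s)$. A function $h:V(G)\to[0,1]$ is a $1$-truncated resolving function of $G$ if $h(R_1\{x,y\})\ge 1$ for all distinct $x,y\in V(G)$; $\dim_{1,f}(G)$ is the minimum of $h(V(G))$ over all such $h$. *)

theory Defs
  imports Complex_Main
begin

definition gdist :: "('a \<Rightarrow> 'a \<Rightarrow> bool) \<Rightarrow> 'a \<Rightarrow> 'a \<Rightarrow> nat" where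
  "gdist E x y = (LEAST k. (E ^^ k) x y)"

definition dist1 :: "('a \<Rightarrow> 'a \<Rightarrow> bool) \<Rightarrow> 'a \<Rightarrow> 'a \<Rightarrow> nat" where
  "dist1 E x y = min (gdist E x y) 2"

definition R1 :: "'a set \<Rightarrow> ('a \<Rightarrow> 'a \<Rightarrow> bool) \<Rightarrow> 'a \<Rightarrow> 'a \<Rightarrow> 'a set" where
  "R1 V E x y = {z \<in> V. dist1 E x z \<noteq> dist1 E y z}"

definition trunc1_resolving :: "'a set \<Rightarrow> ('a \<Rightarrow> 'a \<Rightarrow> bool) \<Rightarrow> ('a \<Rightarrow> real) \<Rightarrow> bool" where
  "trunc1_resolving V E h \<longleftrightarrow>
     (\<forall>v\<in>V. 0 \<le> h v \<and> h v \<le> 1) \<and>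
     (\<forall>x\<in>V. \<forall>y\<in>V. x \<noteq> y \<longrightarrow> sum h (R1 V E x y) \<ge> 1)"

definition frac_dim1 :: "'a set \<Rightarrow> ('a \<Rightarrow> 'a \<Rightarrow> bool) \<Rightarrow> real" where
  "frac_dim1 V E = Inf {sum h V | h. trunc1_resolving V E h}"

definition cycle_V :: "nat \<Rightarrow> nat set" where
  "cycle_V n = {0..<n}"

definition cycle_E :: "nat \<Rightarrow> nat \<Rightarrow> nat \<Rightarrow> bool" where
  "cycle_E n i j \<longleftrightarrow> i < n \<and> j < n \<and> (j = (i + 1) mod n \<or> i = (j + 1) mod n)"

end

theory Submission
  imports Defs
begin

text \<open>Truncated distances only see adjacency: for x \<noteq> y, R1{x,y} consists of x, y and
  the vertices adjacent to exactly one of them. On C_n with n \<ge> 5 each of x, y has a neighbour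
  not adjacent to the other, so every R1{x,y} has four elements and the constant 1/4 is
  resolving; conversely R1{i, i+1} lies in the window {i-1, ..., i+2}, and summing the
  constraint over all n windows gives 4 h(V) \<ge> n. For n = 3, 4 the vertices i-1 and i+1 are
  twins, so h(i-1) + h(i+1) \<ge> 1, which sums to 2 h(V) \<ge> n, while the constant 1/2 is
  resolving because x, y \<in> R1{x,y}.\<close>

text \<open>Connectivity is needed because the distance of an unreachable pair is the LEAST
  element of an empty set, an unspecified number.\<close>
definition graph_connected :: "'a set \<Rightarrow> ('a \<Rightarrow> 'a \<Rightarrow> bool) \<Rightarrow> bool" where
  "graph_connected V E \<longleftrightarrow> (\<forall>x\<in>V. \<forall>y\<in>V. \<exists>k. (E ^^ k) x y)"

lemma dist1_eq:
  assumes "(E ^^ k) x y"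
  shows "dist1 E x y = (if x = y then 0 else if E x y then 1 else 2)"
proof -
  let ?d = "gdist E x y"
  have walk: "(E ^^ ?d) x y"
    unfolding gdist_def using assms by (rule LeastI)
  have "?d = 0" if "x = y"
    using that by (simp add: gdist_def)
  moreover have "?d = 1" if "x \<noteq> y" "E x y"
    unfolding gdist_def
  proof (rule Least_equality)
    show "(E ^^ 1) x y" using that(2) by (simp only: relpowp_1)
    show "1 \<le> m" if "(E ^^ m) x y" for m
      using \<open>x \<noteq> y\<close> \<open>(E ^^ m) x y\<close> by (cases m) auto
  qed
  moreover have "?d \<ge> 2" if "x \<noteq> y" "\<not> E x y"
  proof -
    have "?d \<noteq> 0" using walk that(1) by (metis relpowp_0_E)
    moreover have "?d \<noteq> 1" using walk that(2) by (metis relpowp_1)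
    ultimately show ?thesis by linarith
  qed
  ultimately show ?thesis by (auto simp: dist1_def)
qed

lemma mem_R1_iff:
  assumes "graph_connected V E" "x \<in> V" "y \<in> V" "x \<noteq> y"
  shows "z \<in> R1 V E x y \<longleftrightarrow> z \<in> V \<and> (z = x \<or> z = y \<or> (E x z \<longleftrightarrow> \<not> E y z))"
proof (cases "z \<in> V")
  case True
  then obtain k l where "(E ^^ k) x z" "(E ^^ l) y z"
    using assms unfolding graph_connected_def by blast
  then show ?thesis
    using True assms(4) by (auto simp: R1_def dist1_eq)
qed (simp add: R1_def)

lemma card_R1_ge_2:
  assumes "finite V" "graph_connected V E" "x \<in> V" "y \<in> V" "x \<noteq> y"
  shows "2 \<le> card (R1 V E x y)"
proof -
  have "{x, y} \<subseteq> R1 V E x y"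
    using assms(3,4) by (simp add: mem_R1_iff[OF assms(2-5)])
  then have "card {x, y} \<le> card (R1 V E x y)"
    using assms(1) by (intro card_mono) (simp_all add: R1_def)
  then show ?thesis
    using assms(5) by simp
qed

lemma card_R1_ge_4:
  assumes "finite V" "graph_connected V E" "x \<in> V" "y \<in> V" "x \<noteq> y"
    and "z \<in> V" "z \<notin> {x, y}" "E x z" "\<not> E y z"
    and "w \<in> V" "w \<notin> {x, y}" "E y w" "\<not> E x w"
  shows "4 \<le> card (R1 V E x y)"
proof -
  have "distinct [x, y, z, w]"
    using assms(5,7,8,11,13) by auto
  from distinct_card[OF this] have "card {x, y, z, w} = 4"
    by simp
  moreover have "{x, y, z, w} \<subseteq> R1 V E x y"
    using assms(3,4,6-13) by (simp add: mem_R1_iff[OF assms(2-5)])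
  then have "card {x, y, z, w} \<le> card (R1 V E x y)"
    using assms(1) by (intro card_mono) (simp_all add: R1_def)
  ultimately show ?thesis
    by simp
qed

lemma trunc1_resolving_const:
  assumes "finite V" "1 \<le> k"
    and "\<And>x y. x \<in> V \<Longrightarrow> y \<in> V \<Longrightarrow> x \<noteq> y \<Longrightarrow> k \<le> card (R1 V E x y)"
  shows "trunc1_resolving V E (\<lambda>_. 1 / real k)"
  unfolding trunc1_resolving_def
proof (intro conjI ballI impI)
  fix x y assume "x \<in> V" "y \<in> V" "x \<noteq> y"
  then have "real k \<le> real (card (R1 V E x y))"
    using assms(3) by simp
  then show "1 \<le> sum (\<lambda>_. 1 / real k) (R1 V E x y)"
    using assms(2) by (simp add: field_simps)
qed (use assms(2) in auto)

lemma trunc1_resolving_sum_ge: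
  assumes "trunc1_resolving V E h" "finite V" "x \<in> V" "y \<in> V" "x \<noteq> y"
    and "R1 V E x y \<subseteq> A" "A \<subseteq> V"
  shows "1 \<le> sum h A"
proof -
  have "1 \<le> sum h (R1 V E x y)"
    using assms(1,3-5) by (simp add: trunc1_resolving_def)
  also have "\<dots> \<le> sum h A"
    using assms(1,6,7) finite_subset[OF assms(7,2)]
    by (intro sum_mono2) (auto simp: trunc1_resolving_def)
  finally show ?thesis .
qed

lemma frac_dim1_eq_card_div:
  assumes "finite V" "1 \<le> k"
    and "\<And>x y. x \<in> V \<Longrightarrow> y \<in> V \<Longrightarrow> x \<noteq> y \<Longrightarrow> k \<le> card (R1 V E x y)"
    and "\<And>h. trunc1_resolving V E h \<Longrightarrow> real (card V) \<le> k * sum h V"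
  shows "frac_dim1 V E = card V / k"
  unfolding frac_dim1_def
proof (rule cInf_eq_minimum)
  show "card V / k \<in> {sum h V |h. trunc1_resolving V E h}"
    using trunc1_resolving_const[OF assms(1-3)] by (intro CollectI exI[of _ "\<lambda>_. 1 / real k"]) simp
  show "card V / k \<le> s" if "s \<in> {sum h V |h. trunc1_resolving V E h}" for s
    using that assms(2,4) by (auto simp: field_simps)
qed

definition cyc_succ :: "nat \<Rightarrow> nat \<Rightarrow> nat" where
  "cyc_succ n i = (if Suc i = n then 0 else Suc i)"

definition cyc_pred :: "nat \<Rightarrow> nat \<Rightarrow> nat" where
  "cyc_pred n i = (if i = 0 then n - 1 else i - 1)"

lemma cyc_succ_lt: "i < n \<Longrightarrow> cyc_succ n i < n"
  by (simp add: cyc_succ_def)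

lemma cyc_pred_lt: "i < n \<Longrightarrow> cyc_pred n i < n"
  by (auto simp: cyc_pred_def)

lemma cyc_pred_succ [simp]: "i < n \<Longrightarrow> cyc_pred n (cyc_succ n i) = i"
  by (auto simp: cyc_succ_def cyc_pred_def)

lemma cyc_succ_pred [simp]: "i < n \<Longrightarrow> cyc_succ n (cyc_pred n i) = i"
  by (auto simp: cyc_succ_def cyc_pred_def)

lemma sum_cyc_succ: "(\<Sum>i = 0..<n. f (cyc_succ n i)) = sum f {0..<n}"
  by (rule sum.reindex_bij_witness[where i = "cyc_pred n" and j = "cyc_succ n"])
    (auto simp: cyc_succ_lt cyc_pred_lt)

lemma sum_cyc_pred: "(\<Sum>i = 0..<n. f (cyc_pred n i)) = sum f {0..<n}"
  by (rule sum.reindex_bij_witness[where i = "cyc_succ n" and j = "cyc_pred n"])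
    (auto simp: cyc_succ_lt cyc_pred_lt)

lemma cycle_E_iff: "cycle_E n i j \<longleftrightarrow> i < n \<and> (j = cyc_succ n i \<or> j = cyc_pred n i)"
proof (cases "i < n \<and> j < n")
  case True
  have "Suc k mod n = cyc_succ n k" if "k < n" for k
    using that by (auto simp: cyc_succ_def)
  with True have "cycle_E n i j \<longleftrightarrow> j = cyc_succ n i \<or> i = cyc_succ n j"
    by (simp add: cycle_E_def)
  moreover have "i = cyc_succ n j \<longleftrightarrow> j = cyc_pred n i"
    using True by auto
  ultimately show ?thesis
    using True by blast
next
  case False
  then show ?thesis
    by (auto simp: cycle_E_def cyc_succ_lt cyc_pred_lt)
qed

lemma relpowp_cycle_E: "x < n \<Longrightarrow> (cycle_E n ^^ m) x ((x + m) mod n)"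
proof (induction m)
  case (Suc m)
  have "cycle_E n ((x + m) mod n) ((x + Suc m) mod n)"
    using Suc.prems by (simp add: cycle_E_def mod_Suc_eq)
  then show ?case
    using Suc by (auto intro: relpowp_Suc_I)
qed simp

lemma graph_connected_cycle: "graph_connected (cycle_V n) (cycle_E n)"
  unfolding graph_connected_def cycle_V_def
proof (intro ballI)
  fix x y assume "x \<in> {0..<n}" "y \<in> {0..<n}"
  then have "(x + (y + n - x)) mod n = y" and "x < n"
    by auto
  then show "\<exists>k. (cycle_E n ^^ k) x y"
    by (metis relpowp_cycle_E)
qed

lemma mem_R1_cycle:
  assumes "x < n" "y < n" "x \<noteq> y"
  shows "z \<in> R1 (cycle_V n) (cycle_E n) x y \<longleftrightarrow>
           z < n \<and> (z = x \<or> z = y \<or> (cycle_E n x z \<longleftrightarrow> \<not> cycle_E n y z))"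
  using mem_R1_iff[OF graph_connected_cycle] assms by (simp add: cycle_V_def)

lemma cycle_private_neighbour:
  assumes "5 \<le> n" "x < n" "y < n" "x \<noteq> y"
  shows "\<exists>z < n. z \<notin> {x, y} \<and> cycle_E n x z \<and> \<not> cycle_E n y z"
proof (cases "cyc_succ n x = y \<or> cycle_E n y (cyc_succ n x)")
  case False
  then show ?thesis
    using assms by (intro exI[of _ "cyc_succ n x"]) (auto simp: cycle_E_iff cyc_succ_lt cyc_succ_def)
next
  case True
  then have "\<not> (cyc_pred n x = y \<or> cycle_E n y (cyc_pred n x))"
    using assms by (auto simp: cycle_E_iff cyc_succ_def cyc_pred_def split: if_splits)
  then show ?thesis
    using assms by (intro exI[of _ "cyc_pred n x"]) (auto simp: cycle_E_iff cyc_pred_lt cyc_pred_def)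
qed

lemma cycle_card_R1_ge_4:
  assumes "5 \<le> n" "x < n" "y < n" "x \<noteq> y"
  shows "4 \<le> card (R1 (cycle_V n) (cycle_E n) x y)"
proof -
  obtain z where "z < n" "z \<notin> {x, y}" "cycle_E n x z" "\<not> cycle_E n y z"
    using cycle_private_neighbour[OF assms] by blast
  moreover obtain w where "w < n" "w \<notin> {x, y}" "cycle_E n y w" "\<not> cycle_E n x w"
    using cycle_private_neighbour[OF assms(1,3,2)] assms(4) by blast
  ultimately show ?thesis
    using assms by (intro card_R1_ge_4 graph_connected_cycle) (auto simp: cycle_V_def)
qed

lemma R1_cycle_consecutive_subset:
  assumes "2 \<le> n" "i < n"
  shows "R1 (cycle_V n) (cycle_E n) i (cyc_succ n i)
           \<subseteq> {cyc_pred n i, i, cyc_succ n i, cyc_succ n (cyc_succ n i)}"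
proof -
  have "cyc_succ n i \<noteq> i"
    using assms by (simp add: cyc_succ_def)
  then show ?thesis
    using assms by (auto simp: mem_R1_cycle cycle_E_iff cyc_succ_lt)
qed

lemma R1_cycle_twins_subset:
  assumes "n \<in> {3, 4}" "i < n"
  shows "R1 (cycle_V n) (cycle_E n) (cyc_succ n i) (cyc_pred n i)
           \<subseteq> {cyc_succ n i, cyc_pred n i}"
proof
  fix z assume z: "z \<in> R1 (cycle_V n) (cycle_E n) (cyc_succ n i) (cyc_pred n i)"
  have "cyc_succ n i \<noteq> cyc_pred n i"
    using assms by (auto simp: cyc_succ_def cyc_pred_def)
  with z assms(2) have "z < n"
    and z_cases: "z \<in> {cyc_succ n i, cyc_pred n i} \<or>
                  (cycle_E n (cyc_succ n i) z \<longleftrightarrow> \<not> cycle_E n (cyc_pred n i) z)"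
    by (simp_all add: mem_R1_cycle cyc_succ_lt cyc_pred_lt)
  have "cycle_E n (cyc_succ n i) z \<longleftrightarrow> cycle_E n (cyc_pred n i) z"
    if "z \<notin> {cyc_succ n i, cyc_pred n i}"
    using assms that \<open>z < n\<close> by (auto simp: cycle_E_iff cyc_succ_def cyc_pred_def)
  with z_cases show "z \<in> {cyc_succ n i, cyc_pred n i}"
    by blast
qed

lemma trunc1_resolving_cycle_sum_ge_large:
  assumes "5 \<le> n" "trunc1_resolving (cycle_V n) (cycle_E n) h"
  shows "real n \<le> 4 * sum h {0..<n}"
proof -
  have window: "1 \<le> h (cyc_pred n i) + h i + h (cyc_succ n i) + h (cyc_succ n (cyc_succ n i))"
    if "i < n" for i
  proof -
    have "1 \<le> sum h {cyc_pred n i, i, cyc_succ n i, cyc_succ n (cyc_succ n i)}"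
      using assms(1) that
      by (intro trunc1_resolving_sum_ge[OF assms(2), of i "cyc_succ n i"] R1_cycle_consecutive_subset)
        (auto simp: cycle_V_def cyc_succ_lt cyc_pred_lt cyc_succ_def)
    moreover have "distinct [cyc_pred n i, i, cyc_succ n i, cyc_succ n (cyc_succ n i)]"
      using assms(1) that by (auto simp: cyc_succ_def cyc_pred_def)
    ultimately show ?thesis
      by (simp add: add.assoc)
  qed
  have succ_succ: "(\<Sum>i = 0..<n. h (cyc_succ n (cyc_succ n i))) = sum h {0..<n}"
    using sum_cyc_succ[of "\<lambda>j. h (cyc_succ n j)" n] sum_cyc_succ[of h n] by simp
  have "real n = (\<Sum>i = 0..<n. 1)"
    by simp
  also have "\<dots> \<le> (\<Sum>i = 0..<n.
      h (cyc_pred n i) + h i + h (cyc_succ n i) + h (cyc_succ n (cyc_succ n i)))"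
    using window by (intro sum_mono) simp
  also have "\<dots> = 4 * sum h {0..<n}"
    by (simp add: sum.distrib sum_cyc_succ sum_cyc_pred succ_succ)
  finally show ?thesis .
qed

lemma trunc1_resolving_cycle_sum_ge_small:
  assumes "n \<in> {3, 4}" "trunc1_resolving (cycle_V n) (cycle_E n) h"
  shows "real n \<le> 2 * sum h {0..<n}"
proof -
  have twins: "1 \<le> h (cyc_succ n i) + h (cyc_pred n i)" if "i < n" for i
  proof -
    have "cyc_succ n i \<noteq> cyc_pred n i"
      using assms(1) that by (auto simp: cyc_succ_def cyc_pred_def)
    moreover have "1 \<le> sum h {cyc_succ n i, cyc_pred n i}"
      using assms(1) that calculation
      by (intro trunc1_resolving_sum_ge[OF assms(2), of "cyc_succ n i" "cyc_pred n i"]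
          R1_cycle_twins_subset)
        (auto simp: cycle_V_def cyc_succ_lt cyc_pred_lt)
    ultimately show ?thesis
      by simp
  qed
  have "real n = (\<Sum>i = 0..<n. 1)"
    by simp
  also have "\<dots> \<le> (\<Sum>i = 0..<n. h (cyc_succ n i) + h (cyc_pred n i))"
    using twins by (intro sum_mono) simp
  also have "\<dots> = 2 * sum h {0..<n}"
    by (simp add: sum.distrib sum_cyc_succ sum_cyc_pred)
  finally show ?thesis .
qed

lemma frac_dim1_cycle_small:
  assumes "n \<in> {3, 4}"
  shows "frac_dim1 (cycle_V n) (cycle_E n) = real n / 2"
proof -
  have "frac_dim1 (cycle_V n) (cycle_E n) = card (cycle_V n) / real 2"
    using trunc1_resolving_cycle_sum_ge_small[OF assms]
    by (intro frac_dim1_eq_card_div card_R1_ge_2 graph_connected_cycle) (auto simp: cycle_V_def)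
  then show ?thesis
    by (simp add: cycle_V_def)
qed

lemma frac_dim1_cycle_large:
  assumes "5 \<le> n"
  shows "frac_dim1 (cycle_V n) (cycle_E n) = real n / 4"
proof -
  have "frac_dim1 (cycle_V n) (cycle_E n) = card (cycle_V n) / real 4"
    using assms trunc1_resolving_cycle_sum_ge_large[OF assms]
    by (intro frac_dim1_eq_card_div cycle_card_R1_ge_4) (auto simp: cycle_V_def)
  then show ?thesis
    by (simp add: cycle_V_def)
qed

theorem corollary3p5:
  fixes n :: nat
  assumes "n \<ge> 3"
  shows "(n \<in> {3, 4} \<longrightarrow> frac_dim1 (cycle_V n) (cycle_E n) = real n / 2) \<and>
         (n \<ge> 5 \<longrightarrow> frac_dim1 (cycle_V n) (cycle_E n) = real n / 4)"
  using frac_dim1_cycle_small frac_dim1_cycle_large by blast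

end
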